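(* Let $\Pi_q$ be a projective plane (not necessarily Desarguesian) of order $q\ge 2$. Let $c\ge 1$ be a real number and let $k$ be an integer such that \[ 2c\sqrt{(q+1)\ln (q+1)}+2\le k<\frac{q^{2}-1}{q+2}. \] Then a point set of size $k$ chosen uniformly at random among all $k$-subsets of the point set of $\Pi_q$ is a saturating set with probability greater than \[ 1-\frac{1}{(q+1)^{2c^{2}-2}}. \]
   Context: A point set $S\subset \Pi_q$ is saturating if every point of $\Pi_q\setminus S$ is collinear with two points of $S$. Here $\ln$ denotes the natural logarithm. *)

theory Defs
  imports Complex_Main
begin

definition collinear3 :: "'a set set \<Rightarrow> 'a \<Rightarrow> 'a \<Rightarrow> 'a \<Rightarrow> bool" where
  "collinear3 L x y z \<longleftrightarrow> (\<exists>l\<in>L. x \<in> l \<and> y \<in> l \<and> z \<in> l)"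

definition projective_plane_of_order :: "'a set \<Rightarrow> 'a set set \<Rightarrow> nat \<Rightarrow> bool" where
  "projective_plane_of_order P L q \<longleftrightarrow>
     finite P \<and>
     (\<forall>l\<in>L. l \<subseteq> P \<and> card l = q + 1) \<and>
     (\<forall>x\<in>P. \<forall>y\<in>P. x \<noteq> y \<longrightarrow> (\<exists>!l. l \<in> L \<and> x \<in> l \<and> y \<in> l)) \<and>
     (\<forall>l\<in>L. \<forall>m\<in>L. l \<noteq> m \<longrightarrow> (\<exists>!x. x \<in> l \<and> x \<in> m)) \<and>
     (\<exists>a b c d. {a, b, c, d} \<subseteq> P \<and> card {a, b, c, d} = 4 \<and>
        \<not> collinear3 L a b c \<and> \<not> collinear3 L a b d \<and>
        \<not> collinear3 L a c d \<and> \<not> collinear3 L b c d)"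

definition saturating :: "'a set \<Rightarrow> 'a set set \<Rightarrow> 'a set \<Rightarrow> bool" where
  "saturating P L S \<longleftrightarrow>
     (\<forall>x\<in>P - S. \<exists>a\<in>S. \<exists>b\<in>S. a \<noteq> b \<and> collinear3 L x a b)"

end

theory Submission
  imports Defs
begin

text \<open>If \<open>S\<close> is not saturating, some point \<open>x \<notin> S\<close> lies on no secant of \<open>S\<close>: every line
  through \<open>x\<close> meets \<open>S\<close> at most once. Building such an \<open>S\<close> point by point, the \<open>(i+1)\<close>-st point
  lies on one of the at most \<open>q + 1 - i\<close> lines through \<open>x\<close> still disjoint from the previous
  ones, so there are at most \<open>\<Prod>i<k. q (q + 1 - i) / k!\<close> such sets for each \<open>x\<close>. A union
  bound over the \<open>N = q\<^sup>2 + q + 1\<close> points and comparison with \<open>N choose k\<close> bound the failure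
  probability by \<open>N \<Prod>i<k. q (q + 1 - i) / (N - i) \<le> N exp (- (q - 1) k (k - 1) / (2 N))\<close>, and
  the lower bound on \<open>k\<close> makes this smaller than \<open>(q + 1) powr (2 - 2 c\<^sup>2)\<close>.\<close>

definition lines_through :: "'a set set \<Rightarrow> 'a \<Rightarrow> 'a set set" where
  "lines_through L x = {l \<in> L. x \<in> l}"

locale projective_plane =
  fixes P :: "'a set" and L :: "'a set set" and q :: nat
  assumes projective_plane: "projective_plane_of_order P L q"
begin

lemma plane_axioms:
  "finite P"
  "\<forall>l\<in>L. l \<subseteq> P \<and> card l = q + 1"
  "\<forall>x\<in>P. \<forall>y\<in>P. x \<noteq> y \<longrightarrow> (\<exists>!l. l \<in> L \<and> x \<in> l \<and> y \<in> l)"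
  "\<forall>l\<in>L. \<forall>m\<in>L. l \<noteq> m \<longrightarrow> (\<exists>!x. x \<in> l \<and> x \<in> m)"
  "\<exists>a b c d. {a, b, c, d} \<subseteq> P \<and> card {a, b, c, d} = 4 \<and>
     \<not> collinear3 L a b c \<and> \<not> collinear3 L a b d \<and>
     \<not> collinear3 L a c d \<and> \<not> collinear3 L b c d"
  using projective_plane unfolding projective_plane_of_order_def by simp_all

lemma finite_points: "finite P"
  using plane_axioms(1) .

lemma line_subset_points: "l \<in> L \<Longrightarrow> l \<subseteq> P"
  using plane_axioms(2) by blast

lemma card_line: "l \<in> L \<Longrightarrow> card l = q + 1"
  using plane_axioms(2) by blast

lemma ex1_line_through_two_points:
  "x \<in> P \<Longrightarrow> y \<in> P \<Longrightarrow> x \<noteq> y \<Longrightarrow> \<exists>!l. l \<in> L \<and> x \<in> l \<and> y \<in> l"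
  using plane_axioms(3) by blast

lemma line_eq_if_two_common_points:
  assumes "x \<in> P" "y \<in> P" "x \<noteq> y" "l \<in> L" "m \<in> L" "x \<in> l" "y \<in> l" "x \<in> m" "y \<in> m"
  shows "l = m"
  using ex1_line_through_two_points[OF assms(1-3)] assms(4-) by blast

lemma ex1_common_point:
  "l \<in> L \<Longrightarrow> m \<in> L \<Longrightarrow> l \<noteq> m \<Longrightarrow> \<exists>!x. x \<in> l \<and> x \<in> m"
  using plane_axioms(4) by blast

lemma point_eq_if_on_two_lines:
  assumes "l \<in> L" "m \<in> L" "l \<noteq> m" "x \<in> l" "x \<in> m" "y \<in> l" "y \<in> m"
  shows "x = y"
  using ex1_common_point[OF assms(1-3)] assms(4-) by blast

lemma ex_quadrangle:
  obtains a b c d where "{a, b, c, d} \<subseteq> P" "card {a, b, c, d} = 4"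
    "\<not> collinear3 L a b c" "\<not> collinear3 L a c d"
  using plane_axioms(5) by blast

lemma points_nonempty: "P \<noteq> {}"
  by (metis ex_quadrangle empty_iff insert_subset)

lemma ex_line_avoiding:
  assumes "x \<in> P"
  obtains m where "m \<in> L" "x \<notin> m"
proof -
  obtain a b c d where abcd: "{a, b, c, d} \<subseteq> P" "card {a, b, c, d} = 4"
    "\<not> collinear3 L a b c" "\<not> collinear3 L a c d"
    by (rule ex_quadrangle)
  have "a \<noteq> b" "a \<noteq> c" "c \<noteq> d"
    using abcd(2) by (auto simp: card_insert_if split: if_splits)
  with abcd(1) obtain lab lac lcd where
    lab: "lab \<in> L" "a \<in> lab" "b \<in> lab" and lac: "lac \<in> L" "a \<in> lac" "c \<in> lac"
    and lcd: "lcd \<in> L" "c \<in> lcd" "d \<in> lcd"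
    using ex1_line_through_two_points by (meson insert_subset)
  show ?thesis
  proof (rule ccontr)
    assume "\<not> thesis"
    then have on_all: "\<forall>m\<in>L. x \<in> m" using that by blast
    have "lab \<noteq> lac" using lab lac abcd(3) unfolding collinear3_def by blast
    then have "x = a" using point_eq_if_on_two_lines[OF lab(1) lac(1)] on_all lab lac by blast
    then show False using on_all lcd abcd(4) unfolding collinear3_def by blast
  qed
qed

lemma finite_lines_through: "finite (lines_through L x)"
proof (rule finite_subset)
  show "lines_through L x \<subseteq> Pow P"
    using line_subset_points unfolding lines_through_def by blast
qed (simp add: finite_points)

text \<open>The lines through \<open>x\<close> are in bijection with the points of any line avoiding \<open>x\<close>.\<close>
lemma card_lines_through:
  assumes x: "x \<in> P"
  shows "card (lines_through L x) = q + 1"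
proof -
  obtain m where m: "m \<in> L" "x \<notin> m" using ex_line_avoiding[OF x] .
  define join where "join y = (THE l. l \<in> L \<and> x \<in> l \<and> y \<in> l)" for y
  have join: "join y \<in> L \<and> x \<in> join y \<and> y \<in> join y" if "y \<in> m" for y
  proof -
    have "y \<in> P" "x \<noteq> y" using that m line_subset_points by auto
    from theI'[OF ex1_line_through_two_points[OF x this]] show ?thesis unfolding join_def .
  qed
  have "inj_on join m"
  proof (rule inj_onI)
    fix y z assume "y \<in> m" "z \<in> m" "join y = join z"
    moreover have "join y \<noteq> m" using join[OF \<open>y \<in> m\<close>] m(2) by blast
    ultimately show "y = z"
      using join point_eq_if_on_two_lines[OF _ m(1)] by metis
  qed
  moreover have "join ` m = lines_through L x"
  proof
    show "join ` m \<subseteq> lines_through L x" using join by (auto simp: lines_through_def)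
  next
    show "lines_through L x \<subseteq> join ` m"
    proof
      fix l assume "l \<in> lines_through L x"
      then have l: "l \<in> L" "x \<in> l" "l \<noteq> m" using m unfolding lines_through_def by auto
      then obtain y where y: "y \<in> l" "y \<in> m" using ex1_common_point m(1) by blast
      moreover have "y \<in> P" "x \<noteq> y" using y m line_subset_points by auto
      ultimately have "join y = l"
        using join[OF y(2)] l x line_eq_if_two_common_points by blast
      then show "l \<in> join ` m" using y by blast
    qed
  qed
  ultimately show ?thesis using card_image card_line[OF m(1)] by metis
qed

lemma points_minus_eq_Union_lines_through:
  assumes x: "x \<in> P"
  shows "P - {x} = (\<Union>l\<in>lines_through L x. l - {x})"
proof
  show "P - {x} \<subseteq> (\<Union>l\<in>lines_through L x. l - {x})"
  proof
    fix y assume "y \<in> P - {x}"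
    then obtain l where "l \<in> L" "x \<in> l" "y \<in> l"
      using ex1_line_through_two_points[OF x, of y] by auto
    with \<open>y \<in> P - {x}\<close> show "y \<in> (\<Union>l\<in>lines_through L x. l - {x})"
      unfolding lines_through_def by blast
  qed
qed (use line_subset_points in \<open>auto simp: lines_through_def\<close>)

lemma card_points: "card P = q^2 + q + 1"
proof -
  obtain x where x: "x \<in> P" using points_nonempty by blast
  have "card (P - {x}) = (\<Sum>l\<in>lines_through L x. card (l - {x}))"
    unfolding points_minus_eq_Union_lines_through[OF x]
  proof (rule card_UN_disjoint[OF finite_lines_through])
    show "\<forall>l\<in>lines_through L x. finite (l - {x})"
      using line_subset_points finite_points finite_subset unfolding lines_through_def by blast
    show "\<forall>l\<in>lines_through L x. \<forall>m\<in>lines_through L x. l \<noteq> m \<longrightarrow> (l - {x}) \<inter> (m - {x}) = {}"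
      using point_eq_if_on_two_lines unfolding lines_through_def by blast
  qed
  also have "\<dots> = (\<Sum>l\<in>lines_through L x. q)"
    by (rule sum.cong) (auto simp: lines_through_def card_line)
  also have "\<dots> = (q + 1) * q" using card_lines_through[OF x] by simp
  finally have "card P - 1 = (q + 1) * q"
    using x finite_points by simp
  moreover have "card P \<noteq> 0"
    using x finite_points by auto
  ultimately show ?thesis
    by (simp add: power2_eq_square algebra_simps)
qed

end

definition secant_free_sets :: "'a set \<Rightarrow> 'a set set \<Rightarrow> 'a \<Rightarrow> nat \<Rightarrow> 'a set set" where
  "secant_free_sets P L x m =
     {S. S \<subseteq> P - {x} \<and> card S = m \<and> (\<forall>l\<in>lines_through L x. card (S \<inter> l) \<le> 1)}"

definition unblocked_points :: "'a set set \<Rightarrow> 'a \<Rightarrow> 'a set \<Rightarrow> 'a set" where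
  "unblocked_points L x U = (\<Union>l\<in>{l\<in>lines_through L x. l \<inter> U = {}}. l - {x})"

context projective_plane
begin

lemma finite_secant_free_sets: "finite (secant_free_sets P L x m)"
proof (rule finite_subset)
  show "secant_free_sets P L x m \<subseteq> Pow P" unfolding secant_free_sets_def by blast
qed (simp add: finite_points)

lemma secant_free_sets_0: "secant_free_sets P L x 0 = {{}}"
proof -
  have "S = {}" if "S \<subseteq> P" "card S = 0" for S
    using that finite_subset[OF _ finite_points] by auto
  then show ?thesis unfolding secant_free_sets_def by auto
qed

lemma card_lines_through_disjoint:
  assumes x: "x \<in> P" and U: "U \<in> secant_free_sets P L x m"
  shows "card {l\<in>lines_through L x. l \<inter> U = {}} \<le> q + 1 - m"
proof -
  define meeting where "meeting = {l\<in>lines_through L x. l \<inter> U \<noteq> {}}"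
  have U: "U \<subseteq> P - {x}" "card U = m" "\<forall>l\<in>lines_through L x. card (U \<inter> l) \<le> 1"
    using U unfolding secant_free_sets_def by auto
  have finite_U: "finite U"
    using U(1) finite_points finite_subset by blast
  have finite_meeting: "finite meeting"
    using finite_lines_through unfolding meeting_def by simp
  have cover: "U \<subseteq> (\<Union>l\<in>meeting. U \<inter> l)"
    using U(1) points_minus_eq_Union_lines_through[OF x] unfolding meeting_def by blast
  have "m \<le> card (\<Union>l\<in>meeting. U \<inter> l)"
    using card_mono[OF _ cover] U(2) finite_meeting finite_U by simp
  also have "\<dots> \<le> (\<Sum>l\<in>meeting. card (U \<inter> l))"
    by (rule card_UN_le[OF finite_meeting])
  also have "\<dots> \<le> (\<Sum>l\<in>meeting. 1)"
    by (rule sum_mono) (use U(3) in \<open>auto simp: meeting_def\<close>)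
  finally have "m \<le> card meeting" by simp
  moreover have "{l\<in>lines_through L x. l \<inter> U = {}} = lines_through L x - meeting"
    unfolding meeting_def by blast
  ultimately show ?thesis
    using card_Diff_subset[OF finite_meeting] card_lines_through[OF x]
    by (simp add: meeting_def)
qed

lemma finite_unblocked_points: "finite (unblocked_points L x U)"
proof (rule finite_subset)
  show "unblocked_points L x U \<subseteq> P"
    using line_subset_points unfolding unblocked_points_def lines_through_def by blast
qed (rule finite_points)

lemma card_unblocked_points:
  assumes x: "x \<in> P" and U: "U \<in> secant_free_sets P L x m"
  shows "card (unblocked_points L x U) \<le> q * (q + 1 - m)"
proof -
  have "card (unblocked_points L x U) \<le> (\<Sum>l\<in>{l\<in>lines_through L x. l \<inter> U = {}}. card (l - {x}))"
    unfolding unblocked_points_def by (rule card_UN_le) (simp add: finite_lines_through)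
  also have "\<dots> = (\<Sum>l\<in>{l\<in>lines_through L x. l \<inter> U = {}}. q)"
    by (rule sum.cong) (auto simp: lines_through_def card_line)
  also have "\<dots> \<le> (q + 1 - m) * q"
    using card_lines_through_disjoint[OF x U] by simp
  finally show ?thesis by (simp add: mult.commute)
qed

lemma secant_free_sets_remove:
  assumes x: "x \<in> P" and T: "T \<in> secant_free_sets P L x (Suc m)" and a: "a \<in> T"
  shows "T - {a} \<in> secant_free_sets P L x m" "a \<in> unblocked_points L x (T - {a})"
proof -
  have T: "T \<subseteq> P - {x}" "card T = Suc m" "\<forall>l\<in>lines_through L x. card (T \<inter> l) \<le> 1"
    using T unfolding secant_free_sets_def by auto
  have finite_T: "finite T" using T(1) finite_points finite_subset by blast
  have "card ((T - {a}) \<inter> l) \<le> 1" if "l \<in> lines_through L x" for l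
    using card_mono[of "T \<inter> l" "(T - {a}) \<inter> l"] finite_T T(3) that by force
  then show "T - {a} \<in> secant_free_sets P L x m"
    using T a finite_T unfolding secant_free_sets_def by auto
  obtain l where l: "l \<in> lines_through L x" "a \<in> l"
    using T(1) a points_minus_eq_Union_lines_through[OF x] by blast
  then have "T \<inter> l = {a}"
    using T(3) a finite_T card_le_Suc0_iff_eq[of "T \<inter> l"] by auto
  then show "a \<in> unblocked_points L x (T - {a})"
    using l T(1) a unfolding unblocked_points_def by blast
qed

text \<open>Double counting of the pairs \<open>(T, a)\<close> with \<open>a \<in> T\<close>: removing \<open>a\<close> maps them injectively
  to the pairs \<open>(U, a)\<close> with \<open>a\<close> an unblocked point of \<open>U\<close>.\<close>
lemma card_secant_free_sets_Suc:
  assumes x: "x \<in> P"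
  shows "Suc m * card (secant_free_sets P L x (Suc m))
           \<le> card (secant_free_sets P L x m) * (q * (q + 1 - m))"
proof -
  define pairs where "pairs = Sigma (secant_free_sets P L x (Suc m)) (\<lambda>T. T)"
  define remove where "remove p = (fst p - {snd p}, snd p)" for p :: "'a set \<times> 'a"
  have "card pairs = (\<Sum>T\<in>secant_free_sets P L x (Suc m). card T)"
    unfolding pairs_def
    by (rule card_SigmaI[OF finite_secant_free_sets])
       (use finite_points finite_subset in \<open>auto simp: secant_free_sets_def\<close>)
  also have "\<dots> = Suc m * card (secant_free_sets P L x (Suc m))"
    by (simp add: secant_free_sets_def)
  moreover have "inj_on remove pairs"
    by (auto simp: inj_on_def pairs_def remove_def)
  ultimately have "Suc m * card (secant_free_sets P L x (Suc m)) = card (remove ` pairs)"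
    by (simp add: card_image)
  also have "\<dots> \<le> card (Sigma (secant_free_sets P L x m) (unblocked_points L x))"
  proof (rule card_mono)
    show "finite (Sigma (secant_free_sets P L x m) (unblocked_points L x))"
      by (simp add: finite_secant_free_sets finite_unblocked_points)
    show "remove ` pairs \<subseteq> Sigma (secant_free_sets P L x m) (unblocked_points L x)"
      using secant_free_sets_remove[OF x] by (auto simp: pairs_def remove_def)
  qed
  also have "\<dots> = (\<Sum>U\<in>secant_free_sets P L x m. card (unblocked_points L x U))"
    by (simp add: card_SigmaI finite_secant_free_sets finite_unblocked_points)
  also have "\<dots> \<le> (\<Sum>U\<in>secant_free_sets P L x m. q * (q + 1 - m))"
    by (rule sum_mono) (rule card_unblocked_points[OF x])
  finally show ?thesis by simp
qed

lemma card_secant_free_sets_le: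
  assumes x: "x \<in> P"
  shows "card (secant_free_sets P L x m) * fact m \<le> (\<Prod>i<m. q * (q + 1 - i))"
proof (induction m)
  case 0
  then show ?case by (simp add: secant_free_sets_0)
next
  case (Suc m)
  have "card (secant_free_sets P L x (Suc m)) * fact (Suc m)
          = (Suc m * card (secant_free_sets P L x (Suc m))) * fact m"
    by (simp add: algebra_simps)
  also have "\<dots> \<le> (card (secant_free_sets P L x m) * (q * (q + 1 - m))) * fact m"
    using card_secant_free_sets_Suc[OF x, of m] by (rule mult_right_mono) simp
  also have "\<dots> = (card (secant_free_sets P L x m) * fact m) * (q * (q + 1 - m))"
    by (simp add: algebra_simps)
  also have "\<dots> \<le> (\<Prod>i<m. q * (q + 1 - i)) * (q * (q + 1 - m))"
    using Suc.IH by (rule mult_right_mono) simp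
  also have "\<dots> = (\<Prod>i<Suc m. q * (q + 1 - i))"
    by simp
  finally show ?case .
qed

lemma not_saturating_imp_secant_free:
  assumes S: "S \<subseteq> P" and not_sat: "\<not> saturating P L S"
  obtains x where "x \<in> P" "S \<in> secant_free_sets P L x (card S)"
proof -
  obtain x where x: "x \<in> P - S" and no_pair: "\<forall>a\<in>S. \<forall>b\<in>S. a \<noteq> b \<longrightarrow> \<not> collinear3 L x a b"
    using not_sat unfolding saturating_def by blast
  have finite_S: "finite S" using S finite_points finite_subset by blast
  have "card (S \<inter> l) \<le> 1" if "l \<in> lines_through L x" for l
  proof (rule ccontr)
    assume "\<not> card (S \<inter> l) \<le> 1"
    then obtain a b where "a \<in> S \<inter> l" "b \<in> S \<inter> l" "a \<noteq> b"
      using card_le_Suc0_iff_eq[of "S \<inter> l"] finite_S by auto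
    then show False using no_pair that unfolding collinear3_def lines_through_def by blast
  qed
  then show ?thesis
    using that x S unfolding secant_free_sets_def by auto
qed

lemma card_not_saturating_le:
  "card {S. S \<subseteq> P \<and> card S = k \<and> \<not> saturating P L S} * fact k
     \<le> card P * (\<Prod>i<k. q * (q + 1 - i))"
proof -
  have "{S. S \<subseteq> P \<and> card S = k \<and> \<not> saturating P L S} \<subseteq> (\<Union>x\<in>P. secant_free_sets P L x k)"
    using not_saturating_imp_secant_free by blast
  then have "card {S. S \<subseteq> P \<and> card S = k \<and> \<not> saturating P L S}
               \<le> card (\<Union>x\<in>P. secant_free_sets P L x k)"
    by (intro card_mono) (simp_all add: finite_points finite_secant_free_sets)
  also have "\<dots> \<le> (\<Sum>x\<in>P. card (secant_free_sets P L x k))"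
    by (rule card_UN_le[OF finite_points])
  finally have union_bound: "card {S. S \<subseteq> P \<and> card S = k \<and> \<not> saturating P L S}
               \<le> (\<Sum>x\<in>P. card (secant_free_sets P L x k))" .
  have "card {S. S \<subseteq> P \<and> card S = k \<and> \<not> saturating P L S} * fact k
               \<le> (\<Sum>x\<in>P. card (secant_free_sets P L x k) * fact k)"
    using mult_right_mono[OF union_bound, of "fact k"] by (simp add: sum_distrib_right)
  also have "\<dots> \<le> (\<Sum>x\<in>P. \<Prod>i<k. q * (q + 1 - i))"
    by (rule sum_mono) (rule card_secant_free_sets_le)
  finally show ?thesis by simp
qed

end

lemma pencil_ratio_le_exp:
  fixes Q I :: real
  assumes Q: "1 \<le> Q" and I: "0 \<le> I" "I \<le> Q + 1"
  shows "Q * (Q + 1 - I) / (Q^2 + Q + 1 - I) \<le> exp (- ((Q - 1) * I / (Q^2 + Q + 1)))"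
proof -
  define N where "N = Q^2 + Q + 1"
  have "Q^2 > 0" using Q by simp
  then have N: "N > 0" "N - I > 0"
    using Q I unfolding N_def by linarith+
  have "(N - (Q - 1) * I) * (N - I) - Q * (Q + 1 - I) * N = N + (Q - 1) * I^2"
    unfolding N_def by (simp add: power2_eq_square algebra_simps)
  moreover have "(Q - 1) * I^2 \<ge> 0" using Q by simp
  ultimately have "Q * (Q + 1 - I) * N \<le> (N - (Q - 1) * I) * (N - I)"
    using N by linarith
  then have "Q * (Q + 1 - I) / (N - I) \<le> 1 + - ((Q - 1) * I / N)"
    using N by (simp add: field_simps)
  also have "\<dots> \<le> exp (- ((Q - 1) * I / N))"
    by (rule exp_ge_add_one_self)
  finally show ?thesis unfolding N_def by simp
qed

lemma sum_lessThan_of_nat: "(\<Sum>i<k. real i) = real k * (real k - 1) / 2"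
  by (induction k) (auto simp: field_simps)

lemma prod_pencil_ratios_le_exp:
  fixes q k :: nat
  assumes q: "1 \<le> q" and k: "k \<le> q + 1"
  defines "N \<equiv> real q ^ 2 + real q + 1"
  shows "(\<Prod>i<k. real q * (real q + 1 - real i) / (N - real i))
           \<le> exp (- ((real q - 1) * (real k * (real k - 1) / 2) / N))"
proof -
  have "(\<Prod>i<k. real q * (real q + 1 - real i) / (N - real i))
          \<le> (\<Prod>i<k. exp (- ((real q - 1) * real i / N)))"
  proof (rule prod_mono)
    fix i assume "i \<in> {..<k}"
    then have i: "real i \<le> real q + 1" using k by simp
    have "real q ^ 2 > 0" using q by simp
    then have "N - real i > 0" using i q unfolding N_def by linarith
    then show "0 \<le> real q * (real q + 1 - real i) / (N - real i) \<and>
      real q * (real q + 1 - real i) / (N - real i) \<le> exp (- ((real q - 1) * real i / N))"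
      using pencil_ratio_le_exp[of "real q" "real i"] i q unfolding N_def by simp
  qed
  also have "\<dots> = exp (\<Sum>i<k. - ((real q - 1) * real i / N))"
    by (simp add: exp_sum)
  also have "(\<Sum>i<k. - ((real q - 1) * real i / N)) = - ((real q - 1) * (\<Sum>i<k. real i) / N)"
    by (simp add: sum_negf sum_divide_distrib sum_distrib_left)
  finally show ?thesis by (simp add: sum_lessThan_of_nat)
qed

lemma less_of_less_quotient:
  fixes Q K :: real
  assumes "0 \<le> Q" "K < (Q^2 - 1) / (Q + 2)"
  shows "K < Q"
proof -
  have "(Q^2 - 1) / (Q + 2) < Q"
    using assms(1) by (simp add: divide_less_eq power2_eq_square algebra_simps)
  then show ?thesis using assms(2) by linarith
qed

text \<open>The arithmetic core: with \<open>N = Q\<^sup>2 - 1 + (Q + 2)\<close> and \<open>K (K - 1) = (K - 2)\<^sup>2 + (3 K - 4)\<close>,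
  the upper bound on \<open>K\<close> lets the linear term \<open>3 K - 4\<close> pay for the summand \<open>Q + 2\<close> of \<open>N\<close>.\<close>
lemma quadratic_lower_bound:
  fixes Q K Y :: real
  assumes Q: "0 \<le> Q" and K: "2 \<le> K" "(Q + 2) * K \<le> Q^2 - 1" and Y: "Y \<le> (K - 2)^2"
  shows "(Q^2 + Q + 1) * Y \<le> (Q^2 - 1) * (K * (K - 1))"
proof -
  have "4 \<le> K * K"
    using mult_mono[of 2 K 2 K] K(1) by simp
  then have "(K - 2)^2 \<le> K * (3 * K - 4)"
    by (simp add: power2_eq_square algebra_simps)
  then have "(Q + 2) * (K - 2)^2 \<le> (Q + 2) * (K * (3 * K - 4))"
    using Q by (intro mult_left_mono) simp_all
  also have "\<dots> = ((Q + 2) * K) * (3 * K - 4)"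
    by (simp add: algebra_simps)
  also have "\<dots> \<le> (Q^2 - 1) * (3 * K - 4)"
    using K by (intro mult_right_mono) simp_all
  finally have "(Q^2 + Q + 1) * (K - 2)^2 \<le> (Q^2 - 1) * (K * (K - 1))"
    by (simp add: power2_eq_square algebra_simps)
  moreover have "(Q^2 + Q + 1) * Y \<le> (Q^2 + Q + 1) * (K - 2)^2"
    using Y Q by (intro mult_left_mono) simp_all
  ultimately show ?thesis by linarith
qed

lemma exponent_lower_bound:
  fixes q k :: nat and c :: real
  assumes c: "0 \<le> c"
    and lo: "2 * c * sqrt ((real q + 1) * ln (real q + 1)) + 2 \<le> real k"
    and hi: "real k < (real q ^ 2 - 1) / (real q + 2)"
  shows "2 * c^2 * ln (real q + 1)
           \<le> (real q - 1) * (real k * (real k - 1) / 2) / (real q ^ 2 + real q + 1)"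
proof -
  define Q K l where "Q = real q" and "K = real k" and "l = ln (real q + 1)"
  have l: "0 \<le> l" unfolding l_def by simp
  have root: "0 \<le> 2 * c * sqrt ((Q + 1) * l)"
    using c l unfolding Q_def by simp
  then have K: "2 \<le> K" using lo unfolding Q_def K_def l_def by linarith
  have "(2 * c * sqrt ((Q + 1) * l))^2 \<le> (K - 2)^2"
    using root lo by (intro power_mono) (simp_all add: Q_def K_def l_def)
  then have Y: "4 * c^2 * ((Q + 1) * l) \<le> (K - 2)^2"
    using l by (simp add: power_mult_distrib Q_def)
  have QK: "(Q + 2) * K \<le> Q^2 - 1"
    using hi unfolding Q_def K_def by (simp add: less_divide_eq mult.commute add_pos_nonneg)
  have "(Q^2 + Q + 1) * (4 * c^2 * ((Q + 1) * l)) \<le> (Q^2 - 1) * (K * (K - 1))"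
    using quadratic_lower_bound[OF _ K QK Y] unfolding Q_def by simp
  then have "(Q + 1) * ((Q^2 + Q + 1) * (4 * c^2 * l)) \<le> (Q + 1) * ((Q - 1) * (K * (K - 1)))"
    by (simp add: power2_eq_square algebra_simps)
  then have "(Q^2 + Q + 1) * (4 * c^2 * l) \<le> (Q - 1) * (K * (K - 1))"
    unfolding Q_def by simp
  then have "2 * c^2 * l * (Q^2 + Q + 1) \<le> (Q - 1) * (K * (K - 1) / 2)"
    by (simp add: algebra_simps)
  moreover have "Q^2 + Q + 1 > 0" unfolding Q_def by (simp add: add_nonneg_pos)
  ultimately have "2 * c^2 * l \<le> (Q - 1) * (K * (K - 1) / 2) / (Q^2 + Q + 1)"
    by (simp only: pos_le_divide_eq)
  then show ?thesis by (simp only: Q_def K_def l_def)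
qed

lemma mult_exp_less_powr:
  fixes Q a :: real
  assumes Q: "0 < Q"
  shows "(Q^2 + Q + 1) * exp (- (a * ln (Q + 1))) < 1 / (Q + 1) powr (a - 2)"
proof -
  have "(Q^2 + Q + 1) * exp (- (a * ln (Q + 1))) = (Q^2 + Q + 1) / (Q + 1) powr a"
    using Q by (simp add: powr_def exp_minus divide_inverse)
  also have "\<dots> < (Q + 1)^2 / (Q + 1) powr a"
    using Q by (intro divide_strict_right_mono) (simp_all add: power2_eq_square algebra_simps)
  also have "\<dots> = 1 / (Q + 1) powr (a - 2)"
    using Q by (simp add: powr_diff powr_numeral)
  finally show ?thesis .
qed

lemma mult_prod_pencil_ratios_less:
  fixes q k :: nat and c :: real
  assumes q: "1 \<le> q" and c: "0 \<le> c"
    and lo: "2 * c * sqrt ((real q + 1) * ln (real q + 1)) + 2 \<le> real k"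
    and hi: "real k < (real q ^ 2 - 1) / (real q + 2)"
  defines "N \<equiv> real q ^ 2 + real q + 1"
  shows "N * (\<Prod>i<k. real q * (real q + 1 - real i) / (N - real i))
           < 1 / (real q + 1) powr (2 * c^2 - 2)"
proof -
  have "k \<le> q + 1"
    using less_of_less_quotient[OF _ hi] by simp
  then have "(\<Prod>i<k. real q * (real q + 1 - real i) / (N - real i))
               \<le> exp (- ((real q - 1) * (real k * (real k - 1) / 2) / N))"
    unfolding N_def using prod_pencil_ratios_le_exp q by blast
  also have "\<dots> \<le> exp (- (2 * c^2 * ln (real q + 1)))"
    using exponent_lower_bound[OF c lo hi] unfolding N_def by simp
  finally have "N * (\<Prod>i<k. real q * (real q + 1 - real i) / (N - real i))
                  \<le> N * exp (- (2 * c^2 * ln (real q + 1)))"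
    unfolding N_def by (intro mult_left_mono) (simp_all add: add_nonneg_nonneg)
  also have "\<dots> < 1 / (real q + 1) powr (2 * c^2 - 2)"
    unfolding N_def using mult_exp_less_powr q by simp
  finally show ?thesis .
qed

lemma fact_mult_card_subsets:
  assumes "finite A"
  shows "fact k * real (card {S. S \<subseteq> A \<and> card S = k}) = (\<Prod>i<k. real (card A) - real i)"
  unfolding n_subsets[OF assms] binomial_gbinomial gbinomial_mult_fact
  by (simp add: atLeast0LessThan)

context projective_plane
begin

lemma not_saturating_fraction_le:
  assumes k: "k \<le> q + 1"
  defines "N \<equiv> card P"
  shows "real (card {S. S \<subseteq> P \<and> card S = k \<and> \<not> saturating P L S})
           / real (card {S. S \<subseteq> P \<and> card S = k})
         \<le> real N * (\<Prod>i<k. real q * (real q + 1 - real i) / (real N - real i))"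
proof -
  have "k \<le> N"
    using k by (simp add: N_def card_points)
  then have prod_pos: "(\<Prod>i<k. real N - real i) > 0"
    by (intro prod_pos) simp
  have "real (card {S. S \<subseteq> P \<and> card S = k \<and> \<not> saturating P L S} * fact k)
          \<le> real (N * (\<Prod>i<k. q * (q + 1 - i)))"
    using card_not_saturating_le unfolding N_def of_nat_le_iff .
  moreover have "real (\<Prod>i<k. q * (q + 1 - i)) = (\<Prod>i<k. real q * (real q + 1 - real i))"
    using k by (auto simp: of_nat_diff intro: prod.cong)
  ultimately have not_sat: "real (card {S. S \<subseteq> P \<and> card S = k \<and> \<not> saturating P L S}) * fact k
                             \<le> real N * (\<Prod>i<k. real q * (real q + 1 - real i))"
    by simp
  have "real (card {S. S \<subseteq> P \<and> card S = k \<and> \<not> saturating P L S})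
          / real (card {S. S \<subseteq> P \<and> card S = k})
        = real (card {S. S \<subseteq> P \<and> card S = k \<and> \<not> saturating P L S}) * fact k
          / (\<Prod>i<k. real N - real i)"
    unfolding N_def fact_mult_card_subsets[OF finite_points, symmetric] by simp
  also have "\<dots> \<le> real N * (\<Prod>i<k. real q * (real q + 1 - real i)) / (\<Prod>i<k. real N - real i)"
    using not_sat by (rule divide_right_mono) (simp add: less_imp_le prod_pos)
  also have "\<dots> = real N * (\<Prod>i<k. real q * (real q + 1 - real i) / (real N - real i))"
    by (simp add: prod_dividef)
  finally show ?thesis .
qed

lemma saturating_fraction_ge:
  assumes k: "k \<le> q + 1"
  shows "1 - real (card P) * (\<Prod>i<k. real q * (real q + 1 - real i) / (real (card P) - real i))
           \<le> real (card {S. S \<subseteq> P \<and> card S = k \<and> saturating P L S})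
               / real (card {S. S \<subseteq> P \<and> card S = k})"
proof -
  define all sat not_sat where
    "all = {S. S \<subseteq> P \<and> card S = k}" and
    "sat = {S. S \<subseteq> P \<and> card S = k \<and> saturating P L S}" and
    "not_sat = {S. S \<subseteq> P \<and> card S = k \<and> \<not> saturating P L S}"
  have "card all = card sat + card not_sat"
    unfolding all_def sat_def not_sat_def
    by (subst card_Un_disjoint[symmetric]) (auto simp: finite_points intro: arg_cong[where f = card])
  then have "real (card sat) = real (card all) - real (card not_sat)"
    by simp
  moreover have "card all > 0"
    using k by (simp add: all_def n_subsets[OF finite_points] card_points)
  ultimately have "real (card sat) / real (card all) = 1 - real (card not_sat) / real (card all)"
    by (simp add: diff_divide_distrib)
  then show ?thesis
    using not_saturating_fraction_le[OF k] unfolding all_def sat_def not_sat_def by linarith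
qed

end

theorem theorem2:
  fixes P :: "'a set" and L :: "'a set set" and q k :: nat and c :: real
  assumes "projective_plane_of_order P L q"
    and "q \<ge> 2"
    and "c \<ge> 1"
    and "2 * c * sqrt ((real q + 1) * ln (real q + 1)) + 2 \<le> real k"
    and "real k < (real q ^ 2 - 1) / (real q + 2)"
  shows "real (card {S. S \<subseteq> P \<and> card S = k \<and> saturating P L S})
           / real (card {S. S \<subseteq> P \<and> card S = k})
         > 1 - 1 / ((real q + 1) powr (2 * c ^ 2 - 2))"
proof -
  interpret projective_plane P L q by (rule projective_plane.intro) fact
  have N: "real (card P) = real q ^ 2 + real q + 1"
    by (simp add: card_points)
  have "k \<le> q + 1"
    using less_of_less_quotient[OF _ assms(5)] by simp
  moreover have "real (card P) * (\<Prod>i<k. real q * (real q + 1 - real i) / (real (card P) - real i))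
                   < 1 / (real q + 1) powr (2 * c^2 - 2)"
    unfolding N using mult_prod_pencil_ratios_less assms(2-5) by simp
  ultimately show ?thesis
    using saturating_fraction_ge by fastforce
qed

end
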